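(* If $G$ is a countably infinite ME-homogeneous graph, then its complement $\overline{G}$ is MH-homogeneous.
   Context: All graphs are undirected and loopless; subgraphs are induced. A monomorphism is an injective map sending adjacent vertices to adjacent vertices. $G$ is ME-homogeneous if every monomorphism between finite induced subgraphs of $G$ is the restriction of a surjective endomorphism of $G$; $G$ is MH-homogeneous if every monomorphism between finite induced subgraphs of $G$ is the restriction of an endomorphism of $G$. *)

theory Defs
  imports Main "HOL-Library.Countable_Set"
begin

definition graph :: "'a set \<Rightarrow> ('a \<Rightarrow> 'a \<Rightarrow> bool) \<Rightarrow> bool" where
  "graph V E \<longleftrightarrow> (\<forall>x y. E x y \<longrightarrow> x \<in> V \<and> y \<in> V) \<and>
                  (\<forall>x y. E x y \<longrightarrow> E y x) \<and> (\<forall>x. \<not> E x x)"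

definition compl_graph :: "'a set \<Rightarrow> ('a \<Rightarrow> 'a \<Rightarrow> bool) \<Rightarrow> 'a \<Rightarrow> 'a \<Rightarrow> bool" where
  "compl_graph V E x y \<longleftrightarrow> x \<in> V \<and> y \<in> V \<and> x \<noteq> y \<and> \<not> E x y"

definition mono_between :: "('a \<Rightarrow> 'a \<Rightarrow> bool) \<Rightarrow> 'a set \<Rightarrow> 'a set \<Rightarrow> ('a \<Rightarrow> 'a) \<Rightarrow> bool" where
  "mono_between E A B f \<longleftrightarrow> (\<forall>x\<in>A. f x \<in> B) \<and> inj_on f A \<and>
     (\<forall>x\<in>A. \<forall>y\<in>A. E x y \<longrightarrow> E (f x) (f y))"

definition endo :: "'a set \<Rightarrow> ('a \<Rightarrow> 'a \<Rightarrow> bool) \<Rightarrow> ('a \<Rightarrow> 'a) \<Rightarrow> bool" where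
  "endo V E h \<longleftrightarrow> (\<forall>x\<in>V. h x \<in> V) \<and> (\<forall>x\<in>V. \<forall>y\<in>V. E x y \<longrightarrow> E (h x) (h y))"

definition ME_homogeneous :: "'a set \<Rightarrow> ('a \<Rightarrow> 'a \<Rightarrow> bool) \<Rightarrow> bool" where
  "ME_homogeneous V E \<longleftrightarrow>
     (\<forall>A B f. A \<subseteq> V \<and> B \<subseteq> V \<and> finite A \<and> finite B \<and> mono_between E A B f \<longrightarrow>
        (\<exists>h. endo V E h \<and> h ` V = V \<and> (\<forall>x\<in>A. h x = f x)))"

definition MH_homogeneous :: "'a set \<Rightarrow> ('a \<Rightarrow> 'a \<Rightarrow> bool) \<Rightarrow> bool" where
  "MH_homogeneous V E \<longleftrightarrow>
     (\<forall>A B f. A \<subseteq> V \<and> B \<subseteq> V \<and> finite A \<and> finite B \<and> mono_between E A B f \<longrightarrow>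
        (\<exists>h. endo V E h \<and> (\<forall>x\<in>A. h x = f x)))"

end

theory Submission
  imports Defs
begin

text \<open>A monomorphism f of the complement is reflected by G: its inverse is a monomorphism of G
  from f(A) back to A. ME-homogeneity extends that inverse to a surjective endomorphism g of G,
  and any right inverse s of g that agrees with f on A is an endomorphism of the complement,
  since g maps s x and s y back to x and y and so cannot let them be equal or adjacent.\<close>

lemma mono_between_inv_into_compl_graph:
  assumes "graph V E" and "A \<subseteq> V"
    and "mono_between (compl_graph V E) A B f"
  shows "mono_between E (f ` A) A (inv_into A f)"
  unfolding mono_between_def
proof (intro conjI ballI impI)
  have inj: "inj_on f A"
    and pres: "\<And>a b. a \<in> A \<Longrightarrow> b \<in> A \<Longrightarrow> compl_graph V E a b \<Longrightarrow> compl_graph V E (f a) (f b)"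
    using assms(3) by (auto simp: mono_between_def)
  show "inj_on (inv_into A f) (f ` A)"
    by (rule inj_on_inv_into) simp
  show "inv_into A f y \<in> A" if "y \<in> f ` A" for y
    using that by (rule inv_into_into)
  fix x y assume "x \<in> f ` A" "y \<in> f ` A" and xy: "E x y"
  then obtain a b where a: "a \<in> A" "x = f a" and b: "b \<in> A" "y = f b" by auto
  have "a \<noteq> b"
    using xy a b assms(1) by (auto simp: graph_def)
  then have "E a b"
    using pres[OF a(1) b(1)] xy a b assms(2) by (auto simp: compl_graph_def)
  then show "E (inv_into A f x) (inv_into A f y)"
    using a b inj by simp
qed

lemma endo_compl_graph_right_inverse:
  assumes "endo V E g"
    and s: "\<And>y. y \<in> V \<Longrightarrow> s y \<in> V \<and> g (s y) = y"
  shows "endo V (compl_graph V E) s"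
  unfolding endo_def
proof (intro conjI ballI impI)
  show "s x \<in> V" if "x \<in> V" for x
    using s[OF that] by blast
  fix x y assume x: "x \<in> V" and y: "y \<in> V" and xy: "compl_graph V E x y"
  have "\<not> E (s x) (s y)"
  proof
    assume "E (s x) (s y)"
    then have "E x y"
      using assms(1) s[OF x] s[OF y] unfolding endo_def by metis
    with xy show False by (simp add: compl_graph_def)
  qed
  moreover have "s x \<noteq> s y"
    using s[OF x] s[OF y] xy by (auto simp: compl_graph_def)
  ultimately show "compl_graph V E (s x) (s y)"
    using s[OF x] s[OF y] by (simp add: compl_graph_def)
qed

lemma surj_on_right_inverse_extending:
  assumes "g ` V = V"
    and f: "\<And>a. a \<in> A \<Longrightarrow> f a \<in> V \<and> g (f a) = a"
  obtains s where "\<And>y. y \<in> V \<Longrightarrow> s y \<in> V \<and> g (s y) = y" and "\<And>a. a \<in> A \<Longrightarrow> s a = f a"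
proof
  define s where "s y = (if y \<in> A then f y else (SOME z. z \<in> V \<and> g z = y))" for y
  show "s a = f a" if "a \<in> A" for a
    using that by (simp add: s_def)
  show "s y \<in> V \<and> g (s y) = y" if "y \<in> V" for y
  proof (cases "y \<in> A")
    case True
    then show ?thesis using f by (simp add: s_def)
  next
    case False
    have "\<exists>z. z \<in> V \<and> g z = y"
      using assms(1) that by force
    then have "(SOME z. z \<in> V \<and> g z = y) \<in> V \<and> g (SOME z. z \<in> V \<and> g z = y) = y"
      by (rule someI_ex)
    with False show ?thesis by (simp add: s_def)
  qed
qed

lemma ME_homogeneous_imp_MH_homogeneous_compl_graph:
  assumes "graph V E" and "ME_homogeneous V E"
  shows "MH_homogeneous V (compl_graph V E)"
  unfolding MH_homogeneous_def
proof (intro allI impI)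
  fix A B f
  assume "A \<subseteq> V \<and> B \<subseteq> V \<and> finite A \<and> finite B \<and> mono_between (compl_graph V E) A B f"
  then have AV: "A \<subseteq> V" and BV: "B \<subseteq> V" and "finite A"
    and f: "mono_between (compl_graph V E) A B f"
    by auto
  have fAV: "f ` A \<subseteq> V"
    using f BV by (auto simp: mono_between_def)
  obtain g where g: "endo V E g" "g ` V = V" and gf: "\<forall>x\<in>f ` A. g x = inv_into A f x"
    using assms(2) mono_between_inv_into_compl_graph[OF assms(1) AV f] AV fAV \<open>finite A\<close>
    unfolding ME_homogeneous_def by (meson finite_imageI)
  have "f a \<in> V \<and> g (f a) = a" if "a \<in> A" for a
    using that fAV gf f by (auto simp: mono_between_def)
  then obtain s where "\<And>y. y \<in> V \<Longrightarrow> s y \<in> V \<and> g (s y) = y" and "\<And>a. a \<in> A \<Longrightarrow> s a = f a"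
    using surj_on_right_inverse_extending[OF g(2)] by blast
  then show "\<exists>h. endo V (compl_graph V E) h \<and> (\<forall>x\<in>A. h x = f x)"
    using endo_compl_graph_right_inverse[OF g(1)] by blast
qed

theorem theorem7p2:
  fixes V :: "'a set" and E :: "'a \<Rightarrow> 'a \<Rightarrow> bool"
  assumes "graph V E"
    and "countable V" and "infinite V"
    and "ME_homogeneous V E"
  shows "MH_homogeneous V (compl_graph V E)"
  using assms(1,4) by (rule ME_homogeneous_imp_MH_homogeneous_compl_graph)

end
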